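(* Let Assumptions (A1) and (A3) below hold. If $\Pi^\star_\mathbb{X}$ can be reached from $x\in\mathbb{X}$ within $M$ steps, i.e. there exist $\bar u\in\mathbb{U}^M(x)$ and $l\in\{0,\dots,p^\star-1\}$ with $x_{\bar u}(M,x)=\Pi^\star_\mathbb{X}(l)$, then for all $N\in\mathbb{N}$ $$V_N^\beta(x)-\tfrac{N+1}{2}\ell^\star+\lambda(x)+\bar\lambda\le C(M),\qquad C(M)=M(\ell_{\max}-\ell^\star)+2\bar\lambda+\ell^\star p^\star .$$
   Context: System $x(k+1)=f(x(k),u(k))$ with constraint sets $\mathbb{X}\subset\mathbb{R}^n$, $\mathbb{U}\subset\mathbb{R}^m$ and stage cost $\ell:\mathbb{X}\times\mathbb{U}\to\mathbb{R}$, which is assumed non-negative. For $u\in\mathbb{U}^T$, $x_u(0,x)=x$, $x_u(k+1,x)=f(x_u(k,x),u(k))$; $\mathbb{U}^T(x)$ is the set of $u\in\mathbb{U}^T$ with $x_u(k,x)\in\mathbb{X}$ for $k=0,\dots,T$. $[k]_p$ is $k$ mod $p$. A feasible $p$-periodic orbit is $\Pi\in(\mathbb{X}\times\mathbb{U})^p$ with $\Pi_\mathbb{X}([k+1]_p)=f(\Pi(k))$; $\|(x,u)\|_\Pi:=\min_k\|(x,u)-\Pi(k)\|$; $\ell^\star:=\inf$ over all feasible periodic orbits of $\frac1p\sum_{k=0}^{p-1}\ell(\Pi(k))$; $\Pi^\star$ is a fixed feasible $p^\star$-periodic orbit attaining $\ell^\star$. $\ell_{\max}:=\sup_{\mathbb{X}\times\mathbb{U}}\ell$.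 (A1) $f,\ell$ continuous, $\mathbb{X},\mathbb{U}$ compact. (A3) There are $\lambda:\mathbb{X}\to\mathbb{R}$, $\bar\lambda$ with $|\lambda|\le\bar\lambda$ on $\mathbb{X}$, and $\underline\alpha_{\tilde\ell}\in\mathcal K_\infty$ with $\ell(x,u)-\ell^\star+\lambda(x)-\lambda(f(x,u))\ge\underline\alpha_{\tilde\ell}(\|(x,u)\|_{\Pi^\star})$ for all $x\in\mathbb{X}$, $u\in\mathbb{U}^1(x)$. $\beta_N(k)=\frac{N-k}{N}$, $J_N^\beta(x,u)=\sum_{k=0}^{N-1}\beta_N(k)\ell(x_u(k,x),u(k))$, $V_N^\beta(x)=\inf_{u\in\mathbb{U}^N(x)}J_N^\beta(x,u)$. *)

theory Defs
  imports "HOL-Analysis.Analysis"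
begin

fun traj :: "('x \<Rightarrow> 'u \<Rightarrow> 'x) \<Rightarrow> (nat \<Rightarrow> 'u) \<Rightarrow> nat \<Rightarrow> 'x \<Rightarrow> 'x" where
  "traj f u 0 x = x"
| "traj f u (Suc k) x = f (traj f u k x) (u k)"

text \<open>Admissible input sequences U^T(x) (only the first T entries matter).\<close>
definition adm :: "('x \<Rightarrow> 'u \<Rightarrow> 'x) \<Rightarrow> 'x set \<Rightarrow> 'u set \<Rightarrow> nat \<Rightarrow> 'x \<Rightarrow> (nat \<Rightarrow> 'u) set" where
  "adm f X U T x = {u. (\<forall>k<T. u k \<in> U) \<and> (\<forall>k\<le>T. traj f u k x \<in> X)}"

definition feasible_orbit ::
  "('x \<Rightarrow> 'u \<Rightarrow> 'x) \<Rightarrow> 'x set \<Rightarrow> 'u set \<Rightarrow> nat \<Rightarrow> (nat \<Rightarrow> 'x \<times> 'u) \<Rightarrow> bool" where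
  "feasible_orbit f X U p P \<longleftrightarrow> p \<ge> 1 \<and> (\<forall>k<p. P k \<in> X \<times> U) \<and>
     (\<forall>k<p. fst (P ((k + 1) mod p)) = f (fst (P k)) (snd (P k)))"

definition avg_cost :: "('x \<Rightarrow> 'u \<Rightarrow> real) \<Rightarrow> nat \<Rightarrow> (nat \<Rightarrow> 'x \<times> 'u) \<Rightarrow> real" where
  "avg_cost ell p P = (1 / real p) * (\<Sum>k<p. ell (fst (P k)) (snd (P k)))"

definition ell_star ::
  "('x \<Rightarrow> 'u \<Rightarrow> 'x) \<Rightarrow> 'x set \<Rightarrow> 'u set \<Rightarrow> ('x \<Rightarrow> 'u \<Rightarrow> real) \<Rightarrow> real" where
  "ell_star f X U ell = Inf {avg_cost ell p P | p P. feasible_orbit f X U p P}"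

definition orbit_dist :: "nat \<Rightarrow> (nat \<Rightarrow> 'x::real_normed_vector \<times> 'u::real_normed_vector) \<Rightarrow> 'x \<Rightarrow> 'u \<Rightarrow> real"
  where "orbit_dist p P x u = Min ((\<lambda>k. norm ((x, u) - P k)) ` {..<p})"

definition ell_max :: "'x set \<Rightarrow> 'u set \<Rightarrow> ('x \<Rightarrow> 'u \<Rightarrow> real) \<Rightarrow> real" where
  "ell_max X U ell = (SUP z\<in>X \<times> U. ell (fst z) (snd z))"

definition class_Kinf :: "(real \<Rightarrow> real) \<Rightarrow> bool" where
  "class_Kinf \<alpha> \<longleftrightarrow> \<alpha> 0 = 0 \<and> continuous_on {0..} \<alpha> \<and> strict_mono_on {0..} \<alpha> \<and>
     filterlim \<alpha> at_top at_top"

definition J_beta :: "('x \<Rightarrow> 'u \<Rightarrow> 'x) \<Rightarrow> ('x \<Rightarrow> 'u \<Rightarrow> real) \<Rightarrow> nat \<Rightarrow> 'x \<Rightarrow> (nat \<Rightarrow> 'u) \<Rightarrow> real" where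
  "J_beta f ell N x u = (\<Sum>k<N. ((real N - real k) / real N) * ell (traj f u k x) (u k))"

definition V_beta :: "('x \<Rightarrow> 'u \<Rightarrow> 'x) \<Rightarrow> 'x set \<Rightarrow> 'u set \<Rightarrow> ('x \<Rightarrow> 'u \<Rightarrow> real) \<Rightarrow> nat \<Rightarrow> 'x \<Rightarrow> real" where
  "V_beta f X U ell N x = (INF u\<in>adm f X U N x. J_beta f ell N x u)"

end

(* Steer x onto the optimal orbit within M steps and follow the orbit afterwards. Relative to
   ell^star, each of the first M stages costs at most ell_max - ell^star. Along the orbit the
   excess costs ell - ell^star form a p^star-periodic sequence of mean zero bounded below by
   -ell^star, so all its partial sums are at most p^star ell^star, and summation by parts gives
   the same bound for the beta_N-weighted sum. As sum_k beta_N(k) = (N+1)/2, this bounds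
   V_N^beta(x) - (N+1)/2 ell^star; finally lambda(x) + lambdabar <= 2 lambdabar. *)

theory Submission
  imports Defs
begin

lemma sum_lessThan_add_split:
  fixes g :: "nat \<Rightarrow> 'a::comm_monoid_add"
  shows "(\<Sum>k<m + n. g k) = (\<Sum>k<m. g k) + (\<Sum>j<n. g (m + j))"
  by (induction n) (simp_all add: add.assoc)

lemma sum_lessThan_reversed_of_nat:
  "(\<Sum>k<N. real N - real k) = real N * (real N + 1) / 2"
proof (induction N)
  case (Suc N)
  have "(\<Sum>k<Suc N. real (Suc N) - real k) = (\<Sum>k<Suc N. (real N - real k) + 1)"
    by (intro sum.cong) auto
  also have "\<dots> = (\<Sum>k<N. real N - real k) + real (Suc N)"
    by (simp add: sum.distrib)
  finally show ?case
    using Suc by (simp add: field_simps)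
qed simp

lemma periodic_sum_shift:
  fixes d :: "nat \<Rightarrow> 'a::ab_group_add"
  assumes periodic: "\<And>j. d (j + p) = d j"
  shows "(\<Sum>j<p. d (a + j)) = (\<Sum>j<p. d j)"
proof (induction a)
  case (Suc a)
  have "d a + (\<Sum>j<p. d (Suc a + j)) = (\<Sum>j<Suc p. d (a + j))"
    by (subst sum.lessThan_Suc_shift) simp
  also have "\<dots> = (\<Sum>j<p. d (a + j)) + d a"
    using periodic[of a] by simp
  finally show ?case
    using Suc by (simp add: add.commute)
qed simp

lemma periodic_partial_sum_le:
  fixes d :: "nat \<Rightarrow> real"
  assumes periodic: "\<And>j. d (j + p) = d j" and "0 < p"
    and zero_mean: "(\<Sum>j<p. d j) = 0" and lower: "\<And>j. - L \<le> d j"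
  shows "(\<Sum>j<m. d (a + j)) \<le> real p * L"
proof (induction m rule: less_induct)
  case (less m)
  have block: "(\<Sum>j<p. d (b + j)) = 0" for b
    using periodic_sum_shift[of d p, OF periodic] zero_mean by simp
  show ?case
  proof (cases "p \<le> m")
    case True
    then obtain r where m: "m = p + r"
      using le_Suc_ex by blast
    have "d (a + (p + j)) = d (a + j)" for j
      using periodic[of "a + j"] by (simp add: ac_simps)
    then have "(\<Sum>j<m. d (a + j)) = (\<Sum>j<r. d (a + j))"
      using sum_lessThan_add_split[of "\<lambda>j. d (a + j)" p r] block[of a] m by simp
    also have "\<dots> \<le> real p * L"
      using less[of r] m \<open>0 < p\<close> by simp
    finally show ?thesis .
  next
    case False
    then obtain r where p: "p = m + r"
      using le_Suc_ex nat_le_linear by blast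
    have "- (real p * L) \<le> (\<Sum>j<p. d j)"
      using sum_mono[of "{..<p}" "\<lambda>_. - L" d] lower by simp
    then have "0 \<le> L"
      using zero_mean \<open>0 < p\<close> by (simp add: zero_le_mult_iff)
    have "- (real r * L) \<le> (\<Sum>j<r. d (a + (m + j)))"
      using sum_mono[of "{..<r}" "\<lambda>_. - L"] lower by simp
    moreover have "(\<Sum>j<m. d (a + j)) + (\<Sum>j<r. d (a + (m + j))) = 0"
      using sum_lessThan_add_split[of "\<lambda>j. d (a + j)" m r] block[of a] p by simp
    moreover have "real r * L \<le> real p * L"
      using p \<open>0 \<le> L\<close> by (simp add: mult_right_mono)
    ultimately show ?thesis
      by linarith
  qed
qed

lemma weighted_sum_le_of_partial_sums_le:
  fixes e :: "nat \<Rightarrow> real"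
  assumes partial: "\<And>m. (\<Sum>j<m. e j) \<le> B"
  shows "(\<Sum>j<n. (real n - real j) * e j) \<le> real n * B"
proof (induction n)
  case (Suc n)
  have "(\<Sum>j<Suc n. (real (Suc n) - real j) * e j)
      = (\<Sum>j<Suc n. (real n - real j) * e j + e j)"
    by (intro sum.cong) (auto simp: algebra_simps)
  also have "\<dots> = (\<Sum>j<Suc n. (real n - real j) * e j) + (\<Sum>j<Suc n. e j)"
    by (simp add: sum.distrib)
  also have "\<dots> = (\<Sum>j<n. (real n - real j) * e j) + (\<Sum>j<Suc n. e j)"
    by simp
  also have "\<dots> \<le> real n * B + B"
    using Suc partial[of "Suc n"] by linarith
  finally show ?case
    by (simp add: algebra_simps)
qed simp

lemma beta_weighted_excess:
  fixes a :: "nat \<Rightarrow> real"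
  assumes "0 < N"
  shows "(\<Sum>k<N. (real N - real k) / real N * a k) - (real N + 1) / 2 * s
       = (\<Sum>k<N. (real N - real k) / real N * (a k - s))"
proof -
  have "(\<Sum>k<N. (real N - real k) / real N * s) = (real N + 1) / 2 * s"
    using assms by (simp add: sum_distrib_right[symmetric] sum_divide_distrib[symmetric]
        sum_lessThan_reversed_of_nat)
  then show ?thesis
    by (simp add: right_diff_distrib sum_subtractf)
qed

lemma beta_weighted_sum_le:
  fixes a :: "nat \<Rightarrow> real"
  assumes "0 \<le> s" "s \<le> A"
    and head: "\<And>k. k < M \<Longrightarrow> a k \<le> A"
    and tail: "\<And>m. (\<Sum>j<m. a (M + j) - s) \<le> B"
  shows "(\<Sum>k<N. (real N - real k) / real N * a k) - (real N + 1) / 2 * s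
    \<le> real M * (A - s) + B"
proof -
  have "0 \<le> B"
    using tail[of 0] by simp
  have "0 \<le> real M * (A - s)"
    using \<open>s \<le> A\<close> by simp
  define g where "g k = (real N - real k) / real N * (a k - s)" for k
  have excess: "(\<Sum>k<N. (real N - real k) / real N * a k) - (real N + 1) / 2 * s
      = (\<Sum>k<N. g k)" if "0 < N"
    unfolding g_def using beta_weighted_excess[OF that] .
  have head_g: "g k \<le> A - s" if "k < N" "k < M" for k
  proof -
    have "0 \<le> (real N - real k) / real N" "(real N - real k) / real N \<le> 1"
      using that by auto
    moreover have "a k - s \<le> A - s"
      using head[OF that(2)] by simp
    ultimately show ?thesis
      unfolding g_def using \<open>s \<le> A\<close>
      by (metis diff_ge_0_iff_ge mult_left_le_one_le mult_left_mono order_trans)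
  qed
  show ?thesis
  proof (cases "N \<le> M")
    case True
    show ?thesis
    proof (cases "N = 0")
      case False
      have "(\<Sum>k<N. g k) \<le> real N * (A - s)"
        using sum_mono[of "{..<N}" g "\<lambda>_. A - s"] head_g True by simp
      also have "\<dots> \<le> real M * (A - s)"
        using True \<open>s \<le> A\<close> by (simp add: mult_right_mono)
      finally show ?thesis
        using excess False \<open>0 \<le> B\<close> by simp
    qed (use \<open>0 \<le> s\<close> \<open>0 \<le> B\<close> \<open>0 \<le> real M * (A - s)\<close> in simp)
  next
    case False
    then obtain n where N: "N = M + n" and "0 < N"
      using le_Suc_ex nat_le_linear by fastforce
    have "(\<Sum>k<M. g k) \<le> real M * (A - s)"
      using sum_mono[of "{..<M}" g "\<lambda>_. A - s"] head_g N by simp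
    moreover have "(\<Sum>j<n. g (M + j)) \<le> B"
    proof -
      have "(\<Sum>j<n. g (M + j)) = (\<Sum>j<n. (real n - real j) * (a (M + j) - s)) / real N"
        by (simp add: g_def N sum_divide_distrib)
      also have "\<dots> \<le> real n * B / real N"
        using weighted_sum_le_of_partial_sums_le[of "\<lambda>j. a (M + j) - s" B n] tail
        by (simp add: divide_right_mono)
      also have "\<dots> \<le> real N * B / real N"
        using N \<open>0 \<le> B\<close> by (intro divide_right_mono mult_right_mono) auto
      also have "\<dots> = B"
        using \<open>0 < N\<close> by simp
      finally show ?thesis .
    qed
    ultimately show ?thesis
      using excess[OF \<open>0 < N\<close>] sum_lessThan_add_split[of g M n] N by simp
  qed
qed

definition input_concat :: "(nat \<Rightarrow> 'u) \<Rightarrow> nat \<Rightarrow> (nat \<Rightarrow> 'u) \<Rightarrow> nat \<Rightarrow> 'u" where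
  "input_concat u M v k = (if k < M then u k else v (k - M))"

definition orbit_input :: "nat \<Rightarrow> (nat \<Rightarrow> 'x \<times> 'u) \<Rightarrow> nat \<Rightarrow> nat \<Rightarrow> 'u" where
  "orbit_input p P l j = snd (P ((l + j) mod p))"

lemma input_concat_add [simp]: "input_concat u M v (M + j) = v j"
  by (simp add: input_concat_def)

lemma traj_cong:
  assumes "\<And>i. i < k \<Longrightarrow> u i = v i"
  shows "traj f u k x = traj f v k x"
  using assms by (induction k) auto

lemma traj_input_concat:
  "traj f (input_concat u M v) (M + j) x = traj f v j (traj f u M x)"
proof (induction j)
  case 0
  show ?case
    by simp (rule traj_cong, simp add: input_concat_def)
qed simp

lemma adm_mono:
  assumes "T \<le> T'"
  shows "adm f X U T' x \<subseteq> adm f X U T x"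
  using assms unfolding adm_def by auto

lemma input_concat_adm:
  assumes u: "u \<in> adm f X U M x" and v: "v \<in> adm f X U T (traj f u M x)"
  shows "input_concat u M v \<in> adm f X U (M + T) x"
  unfolding adm_def
proof safe
  fix k
  assume "k < M + T"
  then show "input_concat u M v k \<in> U"
    using u v unfolding adm_def input_concat_def by auto
next
  fix k
  assume "k \<le> M + T"
  show "traj f (input_concat u M v) k x \<in> X"
  proof (cases "k \<le> M")
    case True
    then have "traj f (input_concat u M v) k x = traj f u k x"
      by (intro traj_cong) (simp add: input_concat_def)
    then show ?thesis
      using u True unfolding adm_def by auto
  next
    case False
    then obtain j where "k = M + j" "j \<le> T"
      using \<open>k \<le> M + T\<close> le_Suc_ex nat_le_linear by (metis add_le_cancel_left)
    then show ?thesis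
      using v traj_input_concat[of f u M v j x] unfolding adm_def by auto
  qed
qed

lemma traj_orbit_input:
  assumes "feasible_orbit f X U p P" "l < p"
  shows "traj f (orbit_input p P l) j (fst (P l)) = fst (P ((l + j) mod p))"
proof (induction j)
  case (Suc j)
  have "0 < p"
    using assms by simp
  then show ?case
    using Suc assms(1) mod_less_divisor[OF \<open>0 < p\<close>, of "l + j"]
    by (auto simp: feasible_orbit_def orbit_input_def mod_Suc_eq)
qed (use assms in simp)

lemma orbit_input_adm:
  assumes "feasible_orbit f X U p P" "l < p"
  shows "orbit_input p P l \<in> adm f X U T (fst (P l))"
proof -
  have "P ((l + j) mod p) \<in> X \<times> U" for j
    using assms by (simp add: feasible_orbit_def)
  then show ?thesis
    using traj_orbit_input[OF assms] unfolding adm_def orbit_input_def by (auto simp: mem_Times_iff)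
qed

lemma input_concat_orbit_input_adm:
  assumes "feasible_orbit f X U p P" "l < p"
    and "u \<in> adm f X U M x" "traj f u M x = fst (P l)"
  shows "input_concat u M (orbit_input p P l) \<in> adm f X U T x"
proof -
  have "input_concat u M (orbit_input p P l) \<in> adm f X U (M + T) x"
    using assms by (intro input_concat_adm) (simp_all add: orbit_input_adm)
  then show ?thesis
    using adm_mono[of T "M + T" f X U x] by auto
qed

lemma traj_input_concat_orbit_input:
  assumes "feasible_orbit f X U p P" "l < p" "traj f u M x = fst (P l)"
  shows "traj f (input_concat u M (orbit_input p P l)) (M + j) x = fst (P ((l + j) mod p))"
  unfolding traj_input_concat assms(3) using assms(1,2) by (rule traj_orbit_input)

lemma ell_le_ell_max:
  assumes "compact X" "compact U" "continuous_on (X \<times> U) (\<lambda>z. ell (fst z) (snd z))"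
    and "x \<in> X" "u \<in> U"
  shows "ell x u \<le> ell_max X U ell"
proof -
  have "bdd_above ((\<lambda>z. ell (fst z) (snd z)) ` (X \<times> U))"
    using assms(1-3)
    by (intro bounded_imp_bdd_above compact_imp_bounded compact_continuous_image compact_Times)
  then show ?thesis
    unfolding ell_max_def using cSUP_upper[of "(x, u)" "X \<times> U"] assms(4,5) by force
qed

lemma V_beta_le_J_beta:
  assumes nonneg: "\<And>x u. x \<in> X \<Longrightarrow> u \<in> U \<Longrightarrow> 0 \<le> ell x u"
    and u: "u \<in> adm f X U N x"
  shows "V_beta f X U ell N x \<le> J_beta f ell N x u"
proof -
  have "0 \<le> J_beta f ell N x v" if "v \<in> adm f X U N x" for v
    unfolding J_beta_def using that nonneg by (auto simp: adm_def intro!: sum_nonneg)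
  then show ?thesis
    unfolding V_beta_def by (intro cINF_lower[OF _ u] bdd_belowI2[where m = 0]) auto
qed

lemma sum_cost_eq_avg_cost:
  assumes "0 < p"
  shows "(\<Sum>k<p. ell (fst (P k)) (snd (P k))) = real p * avg_cost ell p P"
  using assms unfolding avg_cost_def by simp

lemma avg_cost_nonneg:
  assumes "\<And>k. k < p \<Longrightarrow> 0 \<le> ell (fst (P k)) (snd (P k))"
  shows "0 \<le> avg_cost ell p P"
  unfolding avg_cost_def using assms by (intro mult_nonneg_nonneg sum_nonneg) auto

lemma orbit_cost_excess_partial_sum_le:
  assumes "0 < p" and nonneg: "\<And>k. k < p \<Longrightarrow> 0 \<le> ell (fst (P k)) (snd (P k))"
  shows "(\<Sum>j<m. ell (fst (P ((l + j) mod p))) (snd (P ((l + j) mod p))) - avg_cost ell p P)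
    \<le> real p * avg_cost ell p P"
proof -
  define d where "d j = ell (fst (P (j mod p))) (snd (P (j mod p))) - avg_cost ell p P" for j
  have "(\<Sum>j<p. d j) = 0"
    unfolding d_def using sum_cost_eq_avg_cost[OF \<open>0 < p\<close>, of ell P]
    by (simp add: sum_subtractf)
  moreover have "- avg_cost ell p P \<le> d j" for j
    unfolding d_def using nonneg[of "j mod p"] \<open>0 < p\<close> by simp
  ultimately have "(\<Sum>j<m. d (l + j)) \<le> real p * avg_cost ell p P"
    using periodic_partial_sum_le[of d p] \<open>0 < p\<close> by (simp add: d_def)
  then show ?thesis
    by (simp add: d_def)
qed

lemma feasible_orbit_cost_nonneg:
  assumes "feasible_orbit f X U p P" "k < p"
    and "\<And>x u. x \<in> X \<Longrightarrow> u \<in> U \<Longrightarrow> 0 \<le> ell x u"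
  shows "0 \<le> ell (fst (P k)) (snd (P k))"
  using assms by (auto simp: feasible_orbit_def mem_Times_iff)

lemma feasible_orbit_avg_cost_le_ell_max:
  assumes "compact X" "compact U" "continuous_on (X \<times> U) (\<lambda>z. ell (fst z) (snd z))"
    and orbit: "feasible_orbit f X U p P"
  shows "avg_cost ell p P \<le> ell_max X U ell"
proof -
  have "(\<Sum>k<p. ell (fst (P k)) (snd (P k))) \<le> real p * ell_max X U ell"
    using orbit sum_mono[of "{..<p}" "\<lambda>k. ell (fst (P k)) (snd (P k))" "\<lambda>_. ell_max X U ell"]
      ell_le_ell_max[OF assms(1-3)] by (auto simp: feasible_orbit_def mem_Times_iff)
  moreover have "0 < p"
    using orbit by (simp add: feasible_orbit_def)
  ultimately show ?thesis
    using sum_cost_eq_avg_cost[of p ell P] by simp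
qed

theorem lemma22:
  fixes f :: "'x::euclidean_space \<Rightarrow> 'u::euclidean_space \<Rightarrow> 'x"
    and X :: "'x set" and U :: "'u set"
    and ell :: "'x \<Rightarrow> 'u \<Rightarrow> real"
    and pstar :: nat and Pistar :: "nat \<Rightarrow> 'x \<times> 'u"
    and lam :: "'x \<Rightarrow> real" and lambar :: real and \<alpha> :: "real \<Rightarrow> real"
    and x :: 'x and M :: nat
  assumes A1: "continuous_on (X \<times> U) (\<lambda>z. f (fst z) (snd z))"
      "continuous_on (X \<times> U) (\<lambda>z. ell (fst z) (snd z))"
      "compact X" "compact U"
    and ell_nonneg: "\<And>x u. x \<in> X \<Longrightarrow> u \<in> U \<Longrightarrow> ell x u \<ge> 0"
    and orbit: "feasible_orbit f X U pstar Pistar"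
    and optimal: "avg_cost ell pstar Pistar = ell_star f X U ell"
    and A3: "\<And>x. x \<in> X \<Longrightarrow> \<bar>lam x\<bar> \<le> lambar"
      "class_Kinf \<alpha>"
      "\<And>x u. x \<in> X \<Longrightarrow> u \<in> U \<Longrightarrow> f x u \<in> X \<Longrightarrow>
         ell x u - ell_star f X U ell + lam x - lam (f x u) \<ge> \<alpha> (orbit_dist pstar Pistar x u)"
    and xX: "x \<in> X"
    and reach: "\<exists>ubar \<in> adm f X U M x. \<exists>l<pstar. traj f ubar M x = fst (Pistar l)"
  shows "\<forall>N::nat. V_beta f X U ell N x - (real N + 1) / 2 * ell_star f X U ell + lam x + lambar
           \<le> real M * (ell_max X U ell - ell_star f X U ell) + 2 * lambar
              + ell_star f X U ell * real pstar"
proof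
  fix N :: nat
  obtain ubar l where ubar: "ubar \<in> adm f X U M x" and "l < pstar"
    and hit: "traj f ubar M x = fst (Pistar l)"
    using reach by blast
  define u where "u = input_concat ubar M (orbit_input pstar Pistar l)"
  have u_adm: "u \<in> adm f X U T x" for T
    unfolding u_def using orbit \<open>l < pstar\<close> ubar hit by (rule input_concat_orbit_input_adm)
  have cost_le_max: "ell (traj f u k x) (u k) \<le> ell_max X U ell" for k
    using u_adm[of "Suc k"] ell_le_ell_max[OF A1(3,4,2)] unfolding adm_def by auto
  have orbit_cost_nonneg: "0 \<le> ell (fst (Pistar k)) (snd (Pistar k))" if "k < pstar" for k
    using orbit that ell_nonneg by (rule feasible_orbit_cost_nonneg)
  have orbit_excess: "(\<Sum>j<m. ell (traj f u (M + j) x) (u (M + j)) - ell_star f X U ell)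
      \<le> real pstar * ell_star f X U ell" for m
    unfolding u_def traj_input_concat_orbit_input[OF orbit \<open>l < pstar\<close> hit] input_concat_add
      orbit_input_def optimal[symmetric]
    using \<open>l < pstar\<close> orbit_cost_nonneg by (intro orbit_cost_excess_partial_sum_le) auto
  have "0 \<le> ell_star f X U ell"
    unfolding optimal[symmetric] using orbit_cost_nonneg by (rule avg_cost_nonneg)
  have "ell_star f X U ell \<le> ell_max X U ell"
    unfolding optimal[symmetric] using A1(3,4,2) orbit by (rule feasible_orbit_avg_cost_le_ell_max)
  have "V_beta f X U ell N x - (real N + 1) / 2 * ell_star f X U ell
      \<le> J_beta f ell N x u - (real N + 1) / 2 * ell_star f X U ell"
    using V_beta_le_J_beta[OF _ u_adm] ell_nonneg by simp
  also have "\<dots> \<le> real M * (ell_max X U ell - ell_star f X U ell) + real pstar * ell_star f X U ell"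
    unfolding J_beta_def
    by (rule beta_weighted_sum_le[OF \<open>0 \<le> ell_star f X U ell\<close> \<open>ell_star f X U ell \<le> ell_max X U ell\<close>
          cost_le_max orbit_excess])
  finally show "V_beta f X U ell N x - (real N + 1) / 2 * ell_star f X U ell + lam x + lambar
           \<le> real M * (ell_max X U ell - ell_star f X U ell) + 2 * lambar
              + ell_star f X U ell * real pstar"
    using A3(1)[OF xX] by (simp add: abs_le_iff mult.commute)
qed

end
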